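(* Let $\mathbf L=(L,\vee,\wedge,0,1)$ be a complemented lattice with $0\neq 1$ and let $a\in L$. Then: (i) $a\in a^{++}$ and $a^{+++}=a^+$; (ii) the poset $(x^+,\le)$ is an antichain for every $x\in L$ if and only if $\mathbf L$ has no sublattice that is isomorphic to the lattice $\mathbf N_5$ and contains $0$ and $1$; (iii) $(a^+,\le)$ is convex, i.e. if $b,c\in a^+$, $d\in L$ and $b\le d\le c$, then $d\in a^+$; (iv) if the mapping $x\mapsto x^{++}$ from $L$ to $2^L$ is not injective, then $\mathbf L$ does not satisfy the identity $x^{++}=\{x\}$ for all $x\in L$.
   Context: A bounded lattice is complemented if every element $a$ has a complement $b$, i.e. $a\vee b=1$ and $a\wedge b=0$; complements need not be unique. For $a\in L$, $a^+:=\{x\in L\mid a\vee x=1,\ a\wedge x=0\}$ is the set of all complements of $a$. For $A\subseteq L$, $A^+:=\{x\in L\mid a\vee x=1\text{ and }a\wedge x=0\text{ for all }a\in A\}$. Thus $a^{++}=(a^+)^+$ and $a^{+++}=((a^+)^+)^+$. A singleton $\{x\}$ is identified with $x$. $\mathbf N_5$ is the five-element non-modular lattice $\{0,a,b,c,1\}$ with $0<a<c<1$ and $b$ incomparable to $a$ and $c$. *)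

theory Defs
  imports Main
begin

definition complemented :: "'a::bounded_lattice itself \<Rightarrow> bool" where
  "complemented _ \<longleftrightarrow> (\<forall>a::'a. \<exists>b. sup a b = top \<and> inf a b = bot)"

definition comps :: "'a::bounded_lattice \<Rightarrow> 'a set" where
  "comps a = {x. sup a x = top \<and> inf a x = bot}"

definition compsS :: "'a::bounded_lattice set \<Rightarrow> 'a set" where
  "compsS A = {x. \<forall>a\<in>A. sup a x = top \<and> inf a x = bot}"

datatype n5 = N0 | Na | Nb | Nc | N1

fun n5_le :: "n5 \<Rightarrow> n5 \<Rightarrow> bool" where
  "n5_le N0 _ = True"
| "n5_le _ N1 = True"
| "n5_le Na Na = True"
| "n5_le Na Nc = True"
| "n5_le Nb Nb = True"
| "n5_le Nc Nc = True"
| "n5_le _ _ = False"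

definition sublattice :: "'a::lattice set \<Rightarrow> bool" where
  "sublattice S \<longleftrightarrow> (\<forall>x\<in>S. \<forall>y\<in>S. sup x y \<in> S \<and> inf x y \<in> S)"

text \<open>S (with the induced order) is isomorphic to N5; for lattices, order
  isomorphisms are exactly lattice isomorphisms.\<close>
definition iso_N5 :: "'a::lattice set \<Rightarrow> bool" where
  "iso_N5 S \<longleftrightarrow> (\<exists>f::n5 \<Rightarrow> 'a. bij_betw f UNIV S \<and> (\<forall>x y. n5_le x y \<longleftrightarrow> f x \<le> f y))"

end

theory Submission
  imports Defs
begin

text \<open>Complementation is a symmetric relation, so \<open>compsS\<close> is the polar map of a Galois
  connection of the power set with itself; (i) is then the usual \<open>X\<^sup>+\<^sup>+\<^sup>+ = X\<^sup>+\<close>, and (iii)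
  holds because \<open>a \<squnion> _\<close> and \<open>a \<sqinter> _\<close> are monotone. For (ii), two complements \<open>y < z\<close> of \<open>x\<close>
  span the sublattice \<open>{0, y, x, z, 1} \<cong> N\<^sub>5\<close>; conversely, in a copy of \<open>N\<^sub>5\<close> through \<open>0\<close> and \<open>1\<close>
  the two comparable elements are complements of the third.\<close>

lemma comps_sym: "y \<in> comps x \<longleftrightarrow> x \<in> comps y"
  by (auto simp: comps_def sup_commute inf_commute)

lemma comps_bot [simp]: "comps bot = {top}"
  by (auto simp: comps_def)

lemma comps_top [simp]: "comps top = {bot}"
  by (auto simp: comps_def)

lemma compsS_singleton: "compsS {a} = comps a"
  by (simp add: compsS_def comps_def)

lemma compsS_antimono: "A \<subseteq> B \<Longrightarrow> compsS B \<subseteq> compsS A"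
  by (auto simp: compsS_def)

lemma subset_compsS_compsS: "A \<subseteq> compsS (compsS A)"
  by (auto simp: compsS_def sup_commute inf_commute)

lemma compsS_compsS_compsS: "compsS (compsS (compsS A)) = compsS A"
  by (meson compsS_antimono subset_compsS_compsS subset_antisym)

lemma comps_convex:
  assumes "b \<in> comps a" "c \<in> comps a" "b \<le> d" "d \<le> c"
  shows "d \<in> comps a"
proof -
  have "top = sup a b" using assms(1) by (simp add: comps_def)
  also have "\<dots> \<le> sup a d" using assms(3) by (simp add: sup.coboundedI2)
  finally have "sup a d = top" by (simp add: top_unique)
  have "inf a d \<le> inf a c" using assms(4) by (simp add: inf.coboundedI2)
  also have "\<dots> = bot" using assms(2) by (simp add: comps_def)
  finally have "inf a d = bot" by (simp add: bot_unique)
  with \<open>sup a d = top\<close> show ?thesis by (simp add: comps_def)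
qed

lemma comps_le_imp_bot_top: "y \<in> comps x \<Longrightarrow> x \<le> y \<Longrightarrow> x = bot \<and> y = top"
  by (auto simp: comps_def inf.absorb1 sup.absorb2)

lemma UNIV_n5: "UNIV = {N0, Na, Nb, Nc, N1}"
  using n5.exhaust by blast

lemma n5_le_antisym: "n5_le p q \<Longrightarrow> n5_le q p \<Longrightarrow> p = q"
  by (cases p; cases q) auto

lemma iso_N5_rangeI:
  assumes "\<And>p q. n5_le p q \<longleftrightarrow> f p \<le> f q"
  shows "iso_N5 (range f)"
proof -
  have "inj f"
    by (rule injI) (use assms n5_le_antisym in fastforce)
  then show ?thesis
    using assms unfolding iso_N5_def by (blast intro: inj_on_imp_bij_betw)
qed

lemma N5_sublattice_if_comps_less:
  fixes x y z :: "'a::bounded_lattice"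
  assumes y: "y \<in> comps x" and z: "z \<in> comps x" and "y < z"
  shows "\<exists>S::'a set. sublattice S \<and> iso_N5 S \<and> bot \<in> S \<and> top \<in> S"
proof -
  have "y \<noteq> bot"
    using y z \<open>y < z\<close> by (auto simp: comps_sym[of y])
  moreover have "z \<noteq> top"
    using y z \<open>y < z\<close> by (auto simp: comps_sym[of z])
  moreover have "top \<noteq> (bot::'a)"
    using order.strict_trans2[OF \<open>y < z\<close> top_greatest] by (metis bot.extremum_strict)
  moreover have "x \<noteq> bot" "x \<noteq> top"
    using y z \<open>y < z\<close> by auto
  moreover have "\<not> x \<le> y" "\<not> x \<le> z"
    using comps_le_imp_bot_top[OF y] comps_le_imp_bot_top[OF z] \<open>x \<noteq> bot\<close> by auto
  moreover have "\<not> y \<le> x" "\<not> z \<le> x"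
    using comps_le_imp_bot_top[of x y] comps_le_imp_bot_top[of x z] y z \<open>y \<noteq> bot\<close> \<open>y < z\<close>
    by (auto simp: comps_sym[of _ x])
  ultimately have order_embedding:
      "n5_le p q \<longleftrightarrow> case_n5 bot y x z top p \<le> case_n5 bot y x z top q" for p q
    using \<open>y < z\<close> by (cases p; cases q) (auto simp: bot_unique top_unique)
  have range: "range (case_n5 bot y x z top) = {bot, y, x, z, top}"
    by (simp add: UNIV_n5)
  have "sublattice {bot, y, x, z, top}"
    using y z \<open>y < z\<close>
    by (auto simp: sublattice_def comps_def sup_commute inf_commute sup.absorb2 inf.absorb1)
  then show ?thesis
    using iso_N5_rangeI[OF order_embedding] range by (metis insertI1 insertI2)
qed

lemma comps_less_if_N5_sublattice:
  fixes S :: "'a::bounded_lattice set"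
  assumes "sublattice S" "iso_N5 S" "bot \<in> S" "top \<in> S"
  shows "\<exists>x::'a. \<exists>y\<in>comps x. \<exists>z\<in>comps x. y < z"
proof -
  obtain f :: "n5 \<Rightarrow> 'a" where range: "range f = S" and inj: "inj f"
    and order_embedding: "\<And>p q. n5_le p q \<longleftrightarrow> f p \<le> f q"
    using assms(2) unfolding iso_N5_def bij_betw_def by blast
  have "f N0 = bot"
  proof -
    obtain k where "f k = bot" using assms(3) unfolding range[symmetric] by (metis rangeE)
    then show ?thesis using order_embedding[of N0 k] by (simp add: bot_unique)
  qed
  have "f N1 = top"
  proof -
    obtain m where "f m = top" using assms(4) unfolding range[symmetric] by (metis rangeE)
    moreover have "n5_le m N1" by (cases m) simp_all
    ultimately show ?thesis using order_embedding[of m N1] by (simp add: top_unique)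
  qed
  have "sup (f Nb) (f w) = top \<and> inf (f Nb) (f w) = bot" if "w = Na \<or> w = Nc" for w
  proof -
    obtain j k where j: "sup (f Nb) (f w) = f j" and k: "inf (f Nb) (f w) = f k"
      using assms(1) range unfolding sublattice_def by (metis rangeI imageE)
    have "n5_le Nb j" "n5_le w j" "n5_le k Nb" "n5_le k w"
      using order_embedding j k by (metis sup.cobounded1 sup.cobounded2 inf.cobounded1 inf.cobounded2)+
    then have "j = N1" "k = N0"
      using that by (cases j; cases k; auto)+
    then show ?thesis
      using j k \<open>f N0 = bot\<close> \<open>f N1 = top\<close> by simp
  qed
  then have "f Na \<in> comps (f Nb)" "f Nc \<in> comps (f Nb)"
    by (auto simp: comps_def)
  moreover have "f Na < f Nc"
    using order_embedding[of Na Nc] inj by (auto simp: less_le inj_eq)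
  ultimately show ?thesis by blast
qed

theorem proposition1:
  fixes a :: "'a::bounded_lattice"
  assumes "complemented TYPE('a)"
    and "(bot::'a) \<noteq> top"
  shows "(a \<in> compsS (comps a) \<and> compsS (compsS (comps a)) = comps a)
    \<and> ((\<forall>x::'a. \<forall>y\<in>comps x. \<forall>z\<in>comps x. y \<le> z \<longrightarrow> y = z)
        \<longleftrightarrow> \<not> (\<exists>S::'a set. sublattice S \<and> iso_N5 S \<and> bot \<in> S \<and> top \<in> S))
    \<and> (\<forall>b\<in>comps a. \<forall>c\<in>comps a. \<forall>d. b \<le> d \<and> d \<le> c \<longrightarrow> d \<in> comps a)
    \<and> (\<not> inj (\<lambda>x::'a. compsS (comps x)) \<longrightarrow> \<not> (\<forall>x::'a. compsS (comps x) = {x}))"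
proof (intro conjI)
  show "a \<in> compsS (comps a)"
    using subset_compsS_compsS[of "{a}"] by (simp add: compsS_singleton)
  show "compsS (compsS (comps a)) = comps a"
    using compsS_compsS_compsS[of "{a}"] by (simp add: compsS_singleton)
  show "(\<forall>x::'a. \<forall>y\<in>comps x. \<forall>z\<in>comps x. y \<le> z \<longrightarrow> y = z)
        \<longleftrightarrow> \<not> (\<exists>S::'a set. sublattice S \<and> iso_N5 S \<and> bot \<in> S \<and> top \<in> S)"
    using N5_sublattice_if_comps_less comps_less_if_N5_sublattice
    by (metis order.strict_iff_order)
  show "\<forall>b\<in>comps a. \<forall>c\<in>comps a. \<forall>d. b \<le> d \<and> d \<le> c \<longrightarrow> d \<in> comps a"
    using comps_convex by blast
  show "\<not> inj (\<lambda>x::'a. compsS (comps x)) \<longrightarrow> \<not> (\<forall>x::'a. compsS (comps x) = {x})"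
    by (auto intro: injI)
qed

end
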